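(* Let $\mathcal{X}$ be a probability distribution over a set of queries, $k \geq 1$, and $\hat q_1,\dots,\hat q_k,\hat c_1,\dots,\hat c_k : \mathcal{X} \to \mathbb{R}$ measurable functions. Let $\Lambda$ be the set of $\lambda \in \mathbb{R}$ for which there exist $x \in \mathcal{X}$ and $i \neq j$ with $\hat q_i(x) - \lambda \hat c_i(x) = \hat q_j(x) - \lambda \hat c_j(x)$. Let $0 \leq \lambda_1 < \lambda_2$. If $[\lambda_1,\lambda_2] \cap \Lambda = \emptyset$, then $S_{\lambda_1} = S_{\lambda_2}$. Furthermore, if $[\lambda_1,\lambda_2] \cap \Lambda = \{\lambda^*\}$, then $S_\lambda \subseteq S_{\lambda^*}$ for all $\lambda \in [\lambda_1,\lambda_2]$.
   Context: A routing strategy is a measurable function $s : \mathcal{X} \to \mathbb{R}^k$ with $s_i(x) \geq 0$ for all $i$ and $\sum_{i=1}^k s_i(x) = 1$ for all $x$. For $\lambda \in \mathbb{R}^+$, $S_\lambda$ is the set of routing strategies $s$ such that for all $x \in \mathcal{X}$ and $i \in \{1,\dots,k\}$: if $\hat q_i(x) - \lambda \hat c_i(x) < \max_j(\hat q_j(x) - \lambda \hat c_j(x))$ then $s_i(x) = 0$. *)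

theory Defs
  imports "HOL-Probability.Probability"
begin

text \<open>Models are indexed by 0..k-1. A routing strategy s : X -> R^k is represented
  as s :: 'a => nat => real, whose components i < k are used.\<close>

definition routing_strategy :: "'a measure \<Rightarrow> nat \<Rightarrow> ('a \<Rightarrow> nat \<Rightarrow> real) \<Rightarrow> bool" where
  "routing_strategy M k s \<longleftrightarrow>
     (\<forall>i<k. (\<lambda>x. s x i) \<in> borel_measurable M) \<and>
     (\<forall>x\<in>space M. \<forall>i<k. s x i \<ge> 0) \<and>
     (\<forall>x\<in>space M. (\<Sum>i<k. s x i) = 1)"

definition S_lambda :: "'a measure \<Rightarrow> nat \<Rightarrow> (nat \<Rightarrow> 'a \<Rightarrow> real) \<Rightarrow> (nat \<Rightarrow> 'a \<Rightarrow> real)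
    \<Rightarrow> real \<Rightarrow> ('a \<Rightarrow> nat \<Rightarrow> real) set" where
  "S_lambda M k q c l = {s. routing_strategy M k s \<and>
     (\<forall>x\<in>space M. \<forall>i<k.
        q i x - l * c i x < (MAX j\<in>{..<k}. q j x - l * c j x) \<longrightarrow> s x i = 0)}"

definition Lambda_set :: "'a measure \<Rightarrow> nat \<Rightarrow> (nat \<Rightarrow> 'a \<Rightarrow> real) \<Rightarrow> (nat \<Rightarrow> 'a \<Rightarrow> real)
    \<Rightarrow> real set" where
  "Lambda_set M k q c = {l. \<exists>x\<in>space M. \<exists>i<k. \<exists>j<k. i \<noteq> j \<and>
     q i x - l * c i x = q j x - l * c j x}"

end

theory Submission
  imports Defs
begin

(* For fixed x the scores q i x - \<lambda> c i x are affine in \<lambda>. If a model j overtakes a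
   maximal model i when moving from \<lambda> to \<lambda>', their score lines cross at some point
   between the two, which lies in \<Lambda> and differs from \<lambda>' (j is strictly ahead there).
   So if \<lambda>' is the only possible point of \<Lambda> between \<lambda> and \<lambda>', maximisers at \<lambda> stay
   maximisers at \<lambda>', i.e. S_\<lambda> \<subseteq> S_\<lambda>'. *)

lemma affine_root_between:
  fixes a b l l' :: real
  assumes "a - l * b \<ge> 0" "a - l' * b < 0"
  shows "\<exists>m\<in>{min l l'..max l l'}. a - m * b = 0"
proof
  have "0 < (l' - l) * b" using assms by (simp add: algebra_simps)
  then have "0 < b \<and> l < l' \<or> b < 0 \<and> l' < l" by (auto simp: zero_less_mult_iff)
  then show "a / b \<in> {min l l'..max l l'}" "a - a / b * b = 0"
    using assms by (auto simp: field_simps)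
qed

lemma argmax_preserved_if_no_crossing:
  fixes l l' :: real
  assumes opt: "\<forall>j<k. q j x - l * c j x \<le> q i x - l * c i x"
    and no_crossing: "\<And>m j. m \<in> {min l l'..max l l'} \<Longrightarrow> j < k \<Longrightarrow> j \<noteq> i \<Longrightarrow>
         q i x - m * c i x = q j x - m * c j x \<Longrightarrow> m = l'"
  shows "\<forall>j<k. q j x - l' * c j x \<le> q i x - l' * c i x"
proof (intro allI impI)
  fix j assume j: "j < k"
  show "q j x - l' * c j x \<le> q i x - l' * c i x"
  proof (rule ccontr)
    assume overtaken: "\<not> ?thesis"
    then have "j \<noteq> i" by auto
    have "(q i x - q j x) - l * (c i x - c j x) \<ge> 0" using opt j by (simp add: algebra_simps)
    moreover have "(q i x - q j x) - l' * (c i x - c j x) < 0" using overtaken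
      by (simp add: algebra_simps)
    ultimately obtain m where m: "m \<in> {min l l'..max l l'}"
      and cross: "(q i x - q j x) - m * (c i x - c j x) = 0"
      using affine_root_between by blast
    then have "m = l'" using no_crossing[OF m j \<open>j \<noteq> i\<close>] by (simp add: algebra_simps)
    with cross overtaken show False by (simp add: algebra_simps)
  qed
qed

lemma less_MAX_iff_not_argmax:
  fixes f :: "nat \<Rightarrow> real"
  assumes "i < k"
  shows "f i < (MAX j\<in>{..<k}. f j) \<longleftrightarrow> \<not> (\<forall>j<k. f j \<le> f i)"
proof -
  have "{..<k} \<noteq> {}" using assms by auto
  then show ?thesis by (auto simp: Max_gr_iff not_le)
qed

lemma S_lambda_mono_argmax:
  assumes "\<And>x i. x \<in> space M \<Longrightarrow> i < k \<Longrightarrow> \<forall>j<k. q j x - l * c j x \<le> q i x - l * c i x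
      \<Longrightarrow> \<forall>j<k. q j x - l' * c j x \<le> q i x - l' * c i x"
  shows "S_lambda M k q c l \<subseteq> S_lambda M k q c l'"
proof
  fix s assume s: "s \<in> S_lambda M k q c l"
  have "s x i = 0" if x: "x \<in> space M" and i: "i < k"
    and "q i x - l' * c i x < (MAX j\<in>{..<k}. q j x - l' * c j x)" for x i
  proof -
    have "q i x - l * c i x < (MAX j\<in>{..<k}. q j x - l * c j x)"
      using that assms[OF x i]
        less_MAX_iff_not_argmax[OF i, of "\<lambda>j. q j x - l * c j x"]
        less_MAX_iff_not_argmax[OF i, of "\<lambda>j. q j x - l' * c j x"]
      by blast
    with s x i show ?thesis by (simp add: S_lambda_def)
  qed
  with s show "s \<in> S_lambda M k q c l'" by (simp add: S_lambda_def)
qed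

lemma S_lambda_subset_if_no_crossing:
  assumes "\<forall>m\<in>{min l l'..max l l'} \<inter> Lambda_set M k q c. m = l'"
  shows "S_lambda M k q c l \<subseteq> S_lambda M k q c l'"
proof (rule S_lambda_mono_argmax)
  fix x i assume x: "x \<in> space M" and i: "i < k"
    and opt: "\<forall>j<k. q j x - l * c j x \<le> q i x - l * c i x"
  show "\<forall>j<k. q j x - l' * c j x \<le> q i x - l' * c i x"
  proof (rule argmax_preserved_if_no_crossing[where q = q and c = c and x = x and i = i, OF opt])
    fix m j assume m: "m \<in> {min l l'..max l l'}" and "j < k" "j \<noteq> i"
      and "q i x - m * c i x = q j x - m * c j x"
    then have "m \<in> Lambda_set M k q c" using x i unfolding Lambda_set_def by blast
    with m assms show "m = l'" by blast
  qed
qed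

theorem lemma4:
  fixes M :: "'a measure" and k :: nat
    and q c :: "nat \<Rightarrow> 'a \<Rightarrow> real" and l1 l2 :: real
  assumes "prob_space M"
    and "k \<ge> 1"
    and "\<And>i. i < k \<Longrightarrow> q i \<in> borel_measurable M"
    and "\<And>i. i < k \<Longrightarrow> c i \<in> borel_measurable M"
    and "0 \<le> l1" and "l1 < l2"
  shows "({l1..l2} \<inter> Lambda_set M k q c = {} \<longrightarrow> S_lambda M k q c l1 = S_lambda M k q c l2)
       \<and> (\<forall>ls. {l1..l2} \<inter> Lambda_set M k q c = {ls} \<longrightarrow>
              (\<forall>l\<in>{l1..l2}. S_lambda M k q c l \<subseteq> S_lambda M k q c ls))"
proof (intro conjI impI allI ballI)
  assume empty: "{l1..l2} \<inter> Lambda_set M k q c = {}"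
  have "{min l1 l2..max l1 l2} \<inter> Lambda_set M k q c = {}"
    and "{min l2 l1..max l2 l1} \<inter> Lambda_set M k q c = {}"
    using \<open>l1 < l2\<close> empty by (simp_all add: min_def max_def)
  then have "S_lambda M k q c l1 \<subseteq> S_lambda M k q c l2"
    and "S_lambda M k q c l2 \<subseteq> S_lambda M k q c l1"
    by (intro S_lambda_subset_if_no_crossing; simp)+
  then show "S_lambda M k q c l1 = S_lambda M k q c l2" by (rule subset_antisym)
next
  fix ls l assume single: "{l1..l2} \<inter> Lambda_set M k q c = {ls}" and "l \<in> {l1..l2}"
  moreover have "ls \<in> {l1..l2}" using single by blast
  ultimately have "{min l ls..max l ls} \<subseteq> {l1..l2}" by auto
  with single show "S_lambda M k q c l \<subseteq> S_lambda M k q c ls"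
    by (intro S_lambda_subset_if_no_crossing) blast
qed

end
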